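(* For every even integer $k\ge 0$ and every integer $d\ge k$, every $d$-regular graph contains a spanning subgraph in which every vertex has degree $k$ or $k-1$.
   Context: All graphs are finite and simple. A spanning subgraph of $H=(V,E)$ is a graph $(V,E')$ with $E'\subseteq E$. *)

theory Defs
  imports Main
begin

definition simple_graph :: "'a set \<Rightarrow> 'a set set \<Rightarrow> bool" where
  "simple_graph V E \<longleftrightarrow> finite V \<and> (\<forall>e\<in>E. e \<subseteq> V \<and> card e = 2)"

definition degree :: "'a set set \<Rightarrow> 'a \<Rightarrow> nat" where
  "degree E v = card {e \<in> E. v \<in> e}"

definition regular :: "'a set \<Rightarrow> 'a set set \<Rightarrow> nat \<Rightarrow> bool" where
  "regular V E d \<longleftrightarrow> (\<forall>v\<in>V. degree E v = d)"

end

theory Submission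
  imports Defs "HOL-Library.Transitive_Closure_Table"
begin

text \<open>For even degree \<open>d = 2m\<close>, Hakimi's orientation theorem gives an orientation in which every
  vertex has indegree \<open>m\<close>. Splitting each vertex into an out-copy and an in-copy turns it into an
  \<open>m\<close>-regular bipartite graph. Hakimi's theorem again orients this graph so that out-copies have
  indegree \<open>r\<close> and in-copies \<open>m - r\<close>; the edges pointing into out-copies form an \<open>r\<close>-factor,
  and merging the two copies of every vertex turns it into a \<open>2r\<close>-factor of the original graph.
  For odd \<open>d\<close>, two disjoint copies of the graph joined by a perfect matching between twins form a
  \<open>(d + 1)\<close>-regular graph; restricting a \<open>2r\<close>-factor of it to one copy loses at most the matching
  edge at each vertex.

  Hakimi's theorem is proved by taking an orientation of minimal total deviation from the
  prescribed indegrees and reversing a path from an underloaded to an overloaded vertex.\<close>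

lemma simple_graph_finite_edges: "simple_graph V E \<Longrightarrow> finite E"
  unfolding simple_graph_def by (rule finite_subset[of E "Pow V"]) auto

lemma doubleton_eq_of_card_2: "card e = 2 \<Longrightarrow> x \<in> e \<Longrightarrow> y \<in> e \<Longrightarrow> x \<noteq> y \<Longrightarrow> e = {x, y}"
  by (auto simp: card_2_iff)

lemma sum_degree_eq_sum_card_Int:
  assumes "finite E" "finite S"
  shows "(\<Sum>v\<in>S. degree E v) = (\<Sum>e\<in>E. card (e \<inter> S))"
proof -
  have "(\<Sum>v\<in>S. degree E v) = (\<Sum>v\<in>S. \<Sum>e\<in>E. if v \<in> e then 1 else 0)"
    unfolding degree_def using sum.inter_filter[OF assms(1), of "\<lambda>_. 1::nat"] by simp
  also have "\<dots> = (\<Sum>e\<in>E. \<Sum>v\<in>S. if v \<in> e then 1 else 0)"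
    by (rule sum.swap)
  also have "\<dots> = (\<Sum>e\<in>E. card (e \<inter> S))"
    using sum.inter_filter[OF assms(2), of "\<lambda>_. 1::nat"] by (simp add: Int_def conj_commute)
  finally show ?thesis .
qed

lemma sum_degree_eq_twice_card_edges:
  assumes "simple_graph V E"
  shows "(\<Sum>v\<in>V. degree E v) = 2 * card E"
proof -
  have "(\<Sum>v\<in>V. degree E v) = (\<Sum>e\<in>E. card (e \<inter> V))"
    using assms simple_graph_finite_edges[OF assms]
    by (simp add: simple_graph_def sum_degree_eq_sum_card_Int)
  also have "\<dots> = (\<Sum>e\<in>E. 2)"
    using assms by (intro sum.cong) (auto simp: simple_graph_def Int_absorb2)
  finally show ?thesis by simp
qed

lemma twice_card_edges_inside_le:
  assumes "simple_graph V E" "S \<subseteq> V"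
  shows "2 * card {e\<in>E. e \<subseteq> S} \<le> (\<Sum>v\<in>S. degree E v)"
proof -
  have finE: "finite E" and finS: "finite S"
    using assms simple_graph_finite_edges finite_subset by (auto simp: simple_graph_def)
  have "2 * card {e\<in>E. e \<subseteq> S} = (\<Sum>e\<in>{e\<in>E. e \<subseteq> S}. card (e \<inter> S))"
    using assms(1) by (simp add: simple_graph_def Int_absorb2)
  also have "\<dots> \<le> (\<Sum>e\<in>E. card (e \<inter> S))"
    using finE by (intro sum_mono2) auto
  finally show ?thesis using sum_degree_eq_sum_card_Int[OF finE finS] by simp
qed

lemma card_le_sum_degree_of_cover:
  assumes "finite E" "finite X" "E' \<subseteq> E" "\<forall>e\<in>E'. e \<inter> X \<noteq> {}"
  shows "card E' \<le> (\<Sum>v\<in>X. degree E v)"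
proof -
  have "card E' = (\<Sum>e\<in>E'. 1)" by simp
  also have "\<dots> \<le> (\<Sum>e\<in>E'. card (e \<inter> X))"
    using assms by (intro sum_mono) (auto simp: Suc_le_eq card_gt_0_iff)
  also have "\<dots> \<le> (\<Sum>e\<in>E. card (e \<inter> X))"
    using assms by (intro sum_mono2) auto
  finally show ?thesis using sum_degree_eq_sum_card_Int[OF assms(1,2)] by simp
qed

text \<open>An orientation of \<open>E\<close> is a map \<open>\<sigma>\<close> with \<open>\<sigma> e \<in> e\<close>, choosing a head for every edge.\<close>

definition indegree :: "'a set set \<Rightarrow> ('a set \<Rightarrow> 'a) \<Rightarrow> 'a \<Rightarrow> nat" where
  "indegree E \<sigma> v = card {e\<in>E. \<sigma> e = v}"

definition arc :: "'a set set \<Rightarrow> ('a set \<Rightarrow> 'a) \<Rightarrow> 'a \<Rightarrow> 'a \<Rightarrow> bool" where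
  "arc E \<sigma> x y \<longleftrightarrow> (\<exists>e\<in>E. x \<in> e \<and> \<sigma> e = y \<and> x \<noteq> y)"

lemma sum_indegree:
  assumes "finite E" "finite R"
  shows "(\<Sum>v\<in>R. indegree E \<sigma> v) = card {e\<in>E. \<sigma> e \<in> R}"
proof -
  have "{e\<in>E. \<sigma> e \<in> R} = (\<Union>v\<in>R. {e\<in>E. \<sigma> e = v})" by auto
  moreover have "card (\<Union>v\<in>R. {e\<in>E. \<sigma> e = v}) = (\<Sum>v\<in>R. card {e\<in>E. \<sigma> e = v})"
    by (rule card_UN_disjoint) (use assms in auto)
  ultimately show ?thesis unfolding indegree_def by simp
qed

lemma rtrancl_path_arc_reorient:
  assumes "rtrancl_path (arc E \<sigma>) a ys z" "x \<notin> set (a # ys)"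
    and "e \<in> E" "card e = 2" "x \<in> e" "\<sigma> e \<in> e" "x \<noteq> \<sigma> e"
  shows "rtrancl_path (arc E (\<sigma>(e := x))) a ys z"
  using assms(1,2)
proof (induction ys arbitrary: a)
  case Nil
  then show ?case by (auto elim: rtrancl_path.cases intro: rtrancl_path.base)
next
  case (Cons b ys)
  from Cons.prems(1) have "arc E \<sigma> a b" and tail: "rtrancl_path (arc E \<sigma>) b ys z"
    by (auto elim: rtrancl_path.cases)
  then obtain e' where e': "e' \<in> E" "a \<in> e'" "\<sigma> e' = b" "a \<noteq> b"
    unfolding arc_def by blast
  have "e = {x, \<sigma> e}"
    using assms(4-7) by (rule doubleton_eq_of_card_2)
  then have "e' \<noteq> e"
    using e' Cons.prems(2) by auto
  then have "arc E (\<sigma>(e := x)) a b"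
    using e' unfolding arc_def by auto
  moreover have "rtrancl_path (arc E (\<sigma>(e := x))) b ys z"
    using Cons.IH[OF tail] Cons.prems(2) by (simp add: fun_upd_def)
  ultimately show ?case by (rule rtrancl_path.step)
qed

lemma reverse_path_indegree:
  assumes "rtrancl_path (arc E \<sigma>) x ys z" "distinct (x # ys)"
    and "\<forall>e\<in>E. card e = 2 \<and> \<sigma> e \<in> e" "finite E"
  shows "\<exists>\<sigma>'. (\<forall>e\<in>E. \<sigma>' e \<in> e) \<and>
     (\<forall>v. indegree E \<sigma>' v + (if v = z then 1 else 0) = indegree E \<sigma> v + (if v = x then 1 else 0))"
  using assms
proof (induction ys arbitrary: x \<sigma>)
  case Nil
  then show ?case by (auto elim: rtrancl_path.cases)
next
  case (Cons y ys)
  from Cons.prems(1) have "arc E \<sigma> x y" and path: "rtrancl_path (arc E \<sigma>) y ys z"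
    by (auto elim: rtrancl_path.cases)
  then obtain e where e: "e \<in> E" "x \<in> e" "\<sigma> e = y" "x \<noteq> y"
    unfolding arc_def by blast
  define \<sigma>\<^sub>0 where "\<sigma>\<^sub>0 = \<sigma>(e := x)"
  have orient: "\<forall>e\<in>E. card e = 2 \<and> \<sigma>\<^sub>0 e \<in> e"
    using Cons.prems e unfolding \<sigma>\<^sub>0_def by auto
  have "rtrancl_path (arc E \<sigma>\<^sub>0) y ys z"
    unfolding \<sigma>\<^sub>0_def
    by (rule rtrancl_path_arc_reorient[OF path]) (use Cons.prems e in auto)
  moreover have "distinct (y # ys)"
    using Cons.prems(2) by simp
  ultimately obtain \<sigma>' where \<sigma>': "\<forall>e\<in>E. \<sigma>' e \<in> e"
    "\<forall>v. indegree E \<sigma>' v + (if v = z then 1 else 0) = indegree E \<sigma>\<^sub>0 v + (if v = y then 1 else 0)"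
    using Cons.IH[OF _ _ orient Cons.prems(4)] by blast
  have "indegree E \<sigma>\<^sub>0 v + (if v = y then 1 else 0) = indegree E \<sigma> v + (if v = x then 1 else 0)" for v
  proof -
    have "{e'\<in>E. \<sigma>\<^sub>0 e' = v} = {e'\<in>E - {e}. \<sigma> e' = v} \<union> (if v = x then {e} else {})"
      "{e'\<in>E. \<sigma> e' = v} = {e'\<in>E - {e}. \<sigma> e' = v} \<union> (if v = y then {e} else {})"
      using e unfolding \<sigma>\<^sub>0_def by auto
    then show ?thesis
      unfolding indegree_def using Cons.prems(4) e by (auto simp: card_insert_if)
  qed
  then have "\<forall>v. indegree E \<sigma>' v + (if v = z then 1 else 0) = indegree E \<sigma> v + (if v = x then 1 else 0)"
    using \<sigma>'(2) by metis
  then show ?case using \<sigma>'(1) by blast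
qed

text \<open>The vertices from which \<open>u\<close> can be reached along arcs form a set \<open>R\<close> into which every
  edge with its head in \<open>R\<close> lies entirely; Hakimi's condition for \<open>R\<close> then forces a deficit.\<close>

lemma overloaded_reachable_from_underloaded:
  assumes fin: "finite V" and EV: "\<forall>e\<in>E. e \<subseteq> V \<and> card e = 2"
    and hakimi: "\<forall>S\<subseteq>V. card {e\<in>E. e \<subseteq> S} \<le> (\<Sum>v\<in>S. t v)"
    and orient: "\<forall>e\<in>E. \<sigma> e \<in> e"
    and u: "u \<in> V" "t u < indegree E \<sigma> u"
  shows "\<exists>w. (arc E \<sigma>)\<^sup>*\<^sup>* w u \<and> indegree E \<sigma> w < t w"
proof (rule ccontr)
  assume no_deficit: "\<not> ?thesis"
  define R where "R = {w. (arc E \<sigma>)\<^sup>*\<^sup>* w u}"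
  have finE: "finite E"
    using EV fin by (intro finite_subset[of E "Pow V"]) auto
  have RV: "R \<subseteq> V"
  proof
    fix w assume "w \<in> R"
    then have "(arc E \<sigma>)\<^sup>*\<^sup>* w u" unfolding R_def by simp
    then show "w \<in> V"
      by (induction rule: converse_rtranclp_induct) (use u EV in \<open>auto simp: arc_def\<close>)
  qed
  have closed: "{e\<in>E. \<sigma> e \<in> R} \<subseteq> {e\<in>E. e \<subseteq> R}"
  proof safe
    fix e x assume e: "e \<in> E" "\<sigma> e \<in> R" "x \<in> e"
    show "x \<in> R"
    proof (cases "x = \<sigma> e")
      case False
      then have "arc E \<sigma> x (\<sigma> e)" using e unfolding arc_def by blast
      then show ?thesis using e(2) unfolding R_def by (auto intro: converse_rtranclp_into_rtranclp)
    qed (use e in simp)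
  qed
  have finR: "finite R" using RV fin finite_subset by blast
  have "(\<Sum>v\<in>R. t v) < (\<Sum>v\<in>R. indegree E \<sigma> v)"
    using no_deficit u finR by (intro sum_strict_mono_ex1) (auto simp: R_def not_less)
  also have "\<dots> = card {e\<in>E. \<sigma> e \<in> R}" by (rule sum_indegree[OF finE finR])
  also have "\<dots> \<le> card {e\<in>E. e \<subseteq> R}" using closed finE by (intro card_mono) auto
  also have "\<dots> \<le> (\<Sum>v\<in>R. t v)" using hakimi RV by blast
  finally show False by simp
qed

text \<open>In natural-number arithmetic \<open>(a - b) + (b - a)\<close> is the distance \<open>\<bar>a - b\<bar>\<close>.\<close>

definition deviation :: "'a set \<Rightarrow> 'a set set \<Rightarrow> ('a \<Rightarrow> nat) \<Rightarrow> ('a set \<Rightarrow> 'a) \<Rightarrow> nat" where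
  "deviation V E t \<sigma> = (\<Sum>v\<in>V. (indegree E \<sigma> v - t v) + (t v - indegree E \<sigma> v))"

lemma reverse_path_decreases_deviation:
  assumes "finite V" "finite E" "\<forall>e\<in>E. card e = 2 \<and> \<sigma> e \<in> e"
    and "(arc E \<sigma>)\<^sup>*\<^sup>* w u" "indegree E \<sigma> w < t w" "u \<in> V" "t u < indegree E \<sigma> u"
  shows "\<exists>\<sigma>'. (\<forall>e\<in>E. \<sigma>' e \<in> e) \<and> deviation V E t \<sigma>' < deviation V E t \<sigma>"
proof -
  obtain xs where "rtrancl_path (arc E \<sigma>) w xs u"
    using assms(4) by (auto simp: rtranclp_eq_rtrancl_path)
  then obtain ys where path: "rtrancl_path (arc E \<sigma>) w ys u" and "distinct (w # ys)"
    by (rule rtrancl_path_distinct)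
  then obtain \<sigma>' where \<sigma>': "\<forall>e\<in>E. \<sigma>' e \<in> e" and shift:
    "\<forall>v. indegree E \<sigma>' v + (if v = u then 1 else 0) = indegree E \<sigma> v + (if v = w then 1 else 0)"
    using reverse_path_indegree[OF path _ assms(3,2)] by blast
  have "w \<noteq> u" using assms(5,7) by auto
  then have "(indegree E \<sigma>' v - t v) + (t v - indegree E \<sigma>' v)
      \<le> (indegree E \<sigma> v - t v) + (t v - indegree E \<sigma> v)" for v
    using shift[rule_format, of v] assms(5,7) by (cases "v = u"; cases "v = w") auto
  moreover have "(indegree E \<sigma>' u - t u) + (t u - indegree E \<sigma>' u)
      < (indegree E \<sigma> u - t u) + (t u - indegree E \<sigma> u)"
    using shift[rule_format, of u] \<open>w \<noteq> u\<close> assms(7) by auto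
  ultimately have "deviation V E t \<sigma>' < deviation V E t \<sigma>"
    unfolding deviation_def using assms(1,6) by (intro sum_strict_mono_ex1) auto
  with \<sigma>' show ?thesis by blast
qed

theorem hakimi_orientation:
  fixes t :: "'a \<Rightarrow> nat"
  assumes fin: "finite V" and EV: "\<forall>e\<in>E. e \<subseteq> V \<and> card e = 2"
    and sum_eq: "(\<Sum>v\<in>V. t v) = card E"
    and hakimi: "\<forall>S\<subseteq>V. card {e\<in>E. e \<subseteq> S} \<le> (\<Sum>v\<in>S. t v)"
  shows "\<exists>\<sigma>. (\<forall>e\<in>E. \<sigma> e \<in> e) \<and> (\<forall>v\<in>V. indegree E \<sigma> v = t v)"
proof -
  have finE: "finite E"
    using EV fin by (intro finite_subset[of E "Pow V"]) auto
  have "\<forall>e\<in>E. (SOME x. x \<in> e) \<in> e"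
    using EV by (auto simp: some_in_eq)
  then have "\<exists>\<sigma>. (\<forall>e\<in>E. \<sigma> e \<in> e) \<and>
      (\<forall>\<sigma>'. (\<forall>e\<in>E. \<sigma>' e \<in> e) \<longrightarrow> deviation V E t \<sigma> \<le> deviation V E t \<sigma>')"
    by (rule ex_has_least_nat[where P = "\<lambda>\<sigma>. \<forall>e\<in>E. \<sigma> e \<in> e"])
  then obtain \<sigma> where orient: "\<forall>e\<in>E. \<sigma> e \<in> e" and minimal:
    "\<forall>\<sigma>'. (\<forall>e\<in>E. \<sigma>' e \<in> e) \<longrightarrow> deviation V E t \<sigma> \<le> deviation V E t \<sigma>'"
    by blast
  have no_excess: "indegree E \<sigma> u \<le> t u" if u: "u \<in> V" for u
  proof (rule ccontr)
    assume "\<not> indegree E \<sigma> u \<le> t u"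
    then have excess: "t u < indegree E \<sigma> u" by simp
    then obtain w where reach: "(arc E \<sigma>)\<^sup>*\<^sup>* w u" and deficit: "indegree E \<sigma> w < t w"
      using overloaded_reachable_from_underloaded[OF fin EV hakimi orient u] by blast
    have "\<forall>e\<in>E. card e = 2 \<and> \<sigma> e \<in> e" using EV orient by blast
    then obtain \<sigma>' where "\<forall>e\<in>E. \<sigma>' e \<in> e" "deviation V E t \<sigma>' < deviation V E t \<sigma>"
      using reverse_path_decreases_deviation[OF fin finE _ reach deficit u excess] by blast
    with minimal show False by (meson not_le)
  qed
  have "{e\<in>E. \<sigma> e \<in> V} = E" using orient EV by auto
  then have "(\<Sum>v\<in>V. indegree E \<sigma> v) = (\<Sum>v\<in>V. t v)"
    using sum_indegree[OF finE fin] sum_eq by simp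
  then have "\<forall>v\<in>V. indegree E \<sigma> v = t v"
    using sum_mono_inv no_excess fin by metis
  with orient show ?thesis by blast
qed

lemma sum_degree_transversal:
  assumes "finite E" "finite V" "\<forall>e\<in>E. e \<subseteq> V \<and> card (e \<inter> X) = 1"
  shows "(\<Sum>v\<in>V \<inter> X. degree E v) = card E"
proof -
  have "(\<Sum>v\<in>V \<inter> X. degree E v) = (\<Sum>e\<in>E. card (e \<inter> (V \<inter> X)))"
    using assms(1,2) by (simp add: sum_degree_eq_sum_card_Int)
  also have "\<dots> = (\<Sum>e\<in>E. 1)"
    using assms(3) by (intro sum.cong) (auto simp flip: Int_assoc simp: Int_absorb2)
  finally show ?thesis by simp
qed

lemma card_edges_inside_le:
  assumes "finite E" "finite S" "\<forall>e\<in>E. card (e \<inter> X) = 1" "\<forall>v\<in>S. degree E v = m"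
  shows "card {e\<in>E. e \<subseteq> S} \<le> m * card (S \<inter> X)"
proof -
  have "card {e\<in>E. e \<subseteq> S} \<le> (\<Sum>v\<in>S \<inter> X. degree E v)"
    using assms(1-3) by (intro card_le_sum_degree_of_cover) (auto simp: card_1_singleton_iff)
  also have "\<dots> = m * card (S \<inter> X)"
    using assms(4) by simp
  finally show ?thesis .
qed

lemma le_weighted_sum_of_le_mult:
  fixes x m r a b :: nat
  assumes "x \<le> m * a" "x \<le> m * b" "r \<le> m"
  shows "x \<le> r * a + (m - r) * b"
proof (cases "a \<le> b")
  case True
  have "m * a = r * a + (m - r) * a" using assms(3) by (simp add: diff_mult_distrib)
  also have "\<dots> \<le> r * a + (m - r) * b" using True by simp
  finally show ?thesis using assms(1) by simp
next
  case False
  have "m * b = r * b + (m - r) * b" using assms(3) by (simp add: diff_mult_distrib)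
  also have "\<dots> \<le> r * a + (m - r) * b" using False by simp
  finally show ?thesis using assms(2) by simp
qed

lemma regular_bipartite_orientation:
  assumes G: "simple_graph V E" and reg: "\<forall>v\<in>V. degree E v = m"
    and bip: "\<forall>e\<in>E. card (e \<inter> A) = 1" and "r \<le> m"
  shows "\<exists>\<sigma>. (\<forall>e\<in>E. \<sigma> e \<in> e) \<and> (\<forall>v\<in>V. indegree E \<sigma> v = (if v \<in> A then r else m - r))"
proof (rule hakimi_orientation)
  show finV: "finite V" and EV: "\<forall>e\<in>E. e \<subseteq> V \<and> card e = 2"
    using G by (auto simp: simple_graph_def)
  have finE: "finite E"
    using G by (rule simple_graph_finite_edges)
  have bip': "\<forall>e\<in>E. card (e \<inter> - A) = 1"
  proof
    fix e assume "e \<in> E"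
    then have "card e = 2" "card (e \<inter> A) = 1" "finite e"
      using EV bip by (auto intro: card_ge_0_finite)
    then show "card (e \<inter> - A) = 1"
      using card_Int_Diff[of e A] by (simp add: Diff_eq)
  qed
  have weights: "(\<Sum>v\<in>S. if v \<in> A then r else m - r) = r * card (S \<inter> A) + (m - r) * card (S \<inter> - A)"
    if "finite S" for S
    using that by (simp add: sum.If_cases Int_def Diff_eq)
  have "\<forall>e\<in>E. e \<subseteq> V \<and> card (e \<inter> A) = 1" "\<forall>e\<in>E. e \<subseteq> V \<and> card (e \<inter> - A) = 1"
    using EV bip bip' by auto
  then have "card E = m * card (V \<inter> A)" "card E = m * card (V \<inter> - A)"
    using sum_degree_transversal[OF finE finV] reg by (simp_all add: mult.commute)
  then show "(\<Sum>v\<in>V. if v \<in> A then r else m - r) = card E"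
    unfolding weights[OF finV] using \<open>r \<le> m\<close>
    by (cases "m = 0") (auto simp flip: add_mult_distrib)
  show "\<forall>S\<subseteq>V. card {e\<in>E. e \<subseteq> S} \<le> (\<Sum>v\<in>S. if v \<in> A then r else m - r)"
  proof (intro allI impI)
    fix S assume "S \<subseteq> V"
    then have "finite S" "\<forall>v\<in>S. degree E v = m"
      using finV reg finite_subset by auto
    then show "card {e\<in>E. e \<subseteq> S} \<le> (\<Sum>v\<in>S. if v \<in> A then r else m - r)"
      unfolding weights[OF \<open>finite S\<close>] using finE bip bip' \<open>r \<le> m\<close>
      by (intro le_weighted_sum_of_le_mult card_edges_inside_le)
  qed
qed

lemma degree_edges_directed_into:
  assumes "finite E" "\<forall>e\<in>E. card e = 2 \<and> card (e \<inter> A) = 1 \<and> \<sigma> e \<in> e"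
  shows "degree {e\<in>E. \<sigma> e \<in> A} v = (if v \<in> A then indegree E \<sigma> v else degree E v - indegree E \<sigma> v)"
proof (cases "v \<in> A")
  case True
  have "\<sigma> e = v" if "e \<in> E" "\<sigma> e \<in> A" "v \<in> e" for e
  proof -
    obtain a where "e \<inter> A = {a}" using assms(2) \<open>e \<in> E\<close> by (auto simp: card_1_singleton_iff)
    moreover have "\<sigma> e \<in> e" using assms(2) \<open>e \<in> E\<close> by blast
    ultimately show ?thesis using that True by (metis IntI singletonD)
  qed
  then have "{e\<in>{e\<in>E. \<sigma> e \<in> A}. v \<in> e} = {e\<in>E. \<sigma> e = v}"
    using assms(2) True by auto
  then show ?thesis using True by (simp add: degree_def indegree_def)
next
  case False
  have "\<sigma> e \<in> A" if "e \<in> E" "v \<in> e" "\<sigma> e \<noteq> v" for e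
  proof -
    obtain a where a: "e \<inter> A = {a}" using assms(2) \<open>e \<in> E\<close> by (auto simp: card_1_singleton_iff)
    have "e = {v, \<sigma> e}"
      using assms(2) that by (intro doubleton_eq_of_card_2) auto
    then show ?thesis using a False by auto
  qed
  then have "{e\<in>{e\<in>E. \<sigma> e \<in> A}. v \<in> e} = {e\<in>E. v \<in> e} - {e\<in>E. \<sigma> e = v}"
    using False by auto
  moreover have "{e\<in>E. \<sigma> e = v} \<subseteq> {e\<in>E. v \<in> e}"
    using assms(2) by auto
  ultimately show ?thesis
    using False assms(1) by (simp add: degree_def indegree_def card_Diff_subset)
qed

theorem regular_bipartite_factor:
  assumes G: "simple_graph V E" and reg: "\<forall>v\<in>V. degree E v = m"
    and bip: "\<forall>e\<in>E. card (e \<inter> A) = 1" and "r \<le> m"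
  shows "\<exists>F\<subseteq>E. \<forall>v\<in>V. degree F v = r"
proof -
  obtain \<sigma> where orient: "\<forall>e\<in>E. \<sigma> e \<in> e"
    and indeg: "\<forall>v\<in>V. indegree E \<sigma> v = (if v \<in> A then r else m - r)"
    using regular_bipartite_orientation[OF assms] by blast
  have edges: "\<forall>e\<in>E. card e = 2 \<and> card (e \<inter> A) = 1 \<and> \<sigma> e \<in> e"
    using G bip orient by (auto simp: simple_graph_def)
  have "degree {e\<in>E. \<sigma> e \<in> A} v = r" if "v \<in> V" for v
    using degree_edges_directed_into[OF simple_graph_finite_edges[OF G] edges, of v]
      indeg reg that \<open>r \<le> m\<close> by (cases "v \<in> A") simp_all
  then show ?thesis by (intro exI[of _ "{e\<in>E. \<sigma> e \<in> A}"]) auto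
qed

lemma balanced_orientation:
  assumes G: "simple_graph V E" and reg: "\<forall>v\<in>V. degree E v = 2 * m"
  shows "\<exists>\<sigma>. (\<forall>e\<in>E. \<sigma> e \<in> e) \<and> (\<forall>v\<in>V. indegree E \<sigma> v = m)"
proof (rule hakimi_orientation)
  show "finite V" "\<forall>e\<in>E. e \<subseteq> V \<and> card e = 2"
    using G by (auto simp: simple_graph_def)
  show "(\<Sum>v\<in>V. m) = card E"
    using sum_degree_eq_twice_card_edges[OF G] reg by simp
  show "\<forall>S\<subseteq>V. card {e\<in>E. e \<subseteq> S} \<le> (\<Sum>v\<in>S. m)"
  proof (intro allI impI)
    fix S assume "S \<subseteq> V"
    then have "2 * card {e\<in>E. e \<subseteq> S} \<le> (\<Sum>v\<in>S. 2 * m)"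
      using twice_card_edges_inside_le[OF G] reg by (metis (no_types, lifting) subsetD sum.cong)
    then show "card {e\<in>E. e \<subseteq> S} \<le> (\<Sum>v\<in>S. m)"
      by (simp flip: sum_distrib_left)
  qed
qed

text \<open>The bipartite graph of an orientation \<open>\<sigma>\<close>: the edge \<open>e\<close> joins the out-copy \<open>(x, True)\<close>
  of its tail \<open>x\<close> to the in-copy \<open>(\<sigma> e, False)\<close> of its head.\<close>

definition split_edge :: "('a set \<Rightarrow> 'a) \<Rightarrow> 'a set \<Rightarrow> ('a \<times> bool) set" where
  "split_edge \<sigma> e = (\<lambda>x. (x, x \<noteq> \<sigma> e)) ` e"

lemma mem_split_edge [simp]: "(v, b) \<in> split_edge \<sigma> e \<longleftrightarrow> v \<in> e \<and> b = (v \<noteq> \<sigma> e)"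
  by (auto simp: split_edge_def)

lemma inj_on_split_edge: "inj_on (split_edge \<sigma>) F"
proof (rule inj_on_inverseI)
  show "fst ` split_edge \<sigma> e = e" for e
    by (force simp: split_edge_def)
qed

lemma card_split_edge: "card (split_edge \<sigma> e) = card e"
  unfolding split_edge_def by (rule card_image) (auto intro: inj_onI)

lemma degree_split_graph:
  "degree (split_edge \<sigma> ` F) (v, b) = card {e\<in>F. v \<in> e \<and> b = (v \<noteq> \<sigma> e)}"
proof -
  have "{c\<in>split_edge \<sigma> ` F. (v, b) \<in> c} = split_edge \<sigma> ` {e\<in>F. v \<in> e \<and> b = (v \<noteq> \<sigma> e)}"
    by auto
  then show ?thesis
    unfolding degree_def by (simp add: card_image[OF inj_on_split_edge])
qed

lemma degree_split_graph_sum: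
  assumes "finite F"
  shows "degree (split_edge \<sigma> ` F) (v, True) + degree (split_edge \<sigma> ` F) (v, False) = degree F v"
proof -
  have "{e\<in>F. v \<in> e} = {e\<in>F. v \<in> e \<and> v \<noteq> \<sigma> e} \<union> {e\<in>F. v \<in> e \<and> v = \<sigma> e}"
    by auto
  then have "degree F v = card {e\<in>F. v \<in> e \<and> v \<noteq> \<sigma> e} + card {e\<in>F. v \<in> e \<and> v = \<sigma> e}"
    unfolding degree_def using assms by (simp add: card_Un_disjoint disjoint_iff)
  then show ?thesis
    by (simp add: degree_split_graph)
qed

lemma split_graph_simple_bipartite:
  assumes G: "simple_graph V E" and orient: "\<forall>e\<in>E. \<sigma> e \<in> e"
  shows "simple_graph (V \<times> UNIV) (split_edge \<sigma> ` E)"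
    and "\<forall>c\<in>split_edge \<sigma> ` E. card (c \<inter> UNIV \<times> {True}) = 1"
proof -
  show "simple_graph (V \<times> UNIV) (split_edge \<sigma> ` E)"
    using G by (fastforce simp: simple_graph_def card_split_edge)
  have "split_edge \<sigma> e \<inter> UNIV \<times> {True} = (\<lambda>x. (x, True)) ` (e - {\<sigma> e})" for e
    by (auto simp: split_edge_def)
  moreover have "card (e - {\<sigma> e}) = 1" if "e \<in> E" for e
    using G orient that by (simp add: simple_graph_def)
  ultimately show "\<forall>c\<in>split_edge \<sigma> ` E. card (c \<inter> UNIV \<times> {True}) = 1"
    by (simp add: card_image inj_on_def)
qed

theorem even_regular_factor:
  assumes G: "simple_graph V E" and reg: "\<forall>v\<in>V. degree E v = 2 * m" and "r \<le> m"
  shows "\<exists>F\<subseteq>E. \<forall>v\<in>V. degree F v = 2 * r"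
proof -
  obtain \<sigma> where orient: "\<forall>e\<in>E. \<sigma> e \<in> e" and balanced: "\<forall>v\<in>V. indegree E \<sigma> v = m"
    using balanced_orientation[OF assms(1,2)] by blast
  have in_copy: "degree (split_edge \<sigma> ` E) (v, False) = indegree E \<sigma> v" for v
    unfolding degree_split_graph indegree_def using orient by (metis (lifting))
  have finE: "finite E"
    using G by (rule simple_graph_finite_edges)
  have "degree (split_edge \<sigma> ` E) (v, b) = m" if "v \<in> V" for v b
    using degree_split_graph_sum[OF finE, of \<sigma> v] in_copy balanced reg that by (cases b) auto
  then have "\<forall>p\<in>V \<times> UNIV. degree (split_edge \<sigma> ` E) p = m"
    by auto
  then obtain F' where F': "F' \<subseteq> split_edge \<sigma> ` E" "\<forall>p\<in>V \<times> UNIV. degree F' p = r"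
    using regular_bipartite_factor[OF split_graph_simple_bipartite(1)[OF G orient] _
        split_graph_simple_bipartite(2)[OF G orient] \<open>r \<le> m\<close>] by blast
  define F where "F = {e\<in>E. split_edge \<sigma> e \<in> F'}"
  have "F' = split_edge \<sigma> ` F"
    using F'(1) unfolding F_def by auto
  then have "degree F v = 2 * r" if "v \<in> V" for v
    using degree_split_graph_sum[of F \<sigma> v] finE F'(2) that by (simp add: F_def)
  then show ?thesis
    by (intro exI[of _ F]) (auto simp: F_def)
qed

definition copy_edge :: "bool \<Rightarrow> 'a set \<Rightarrow> ('a \<times> bool) set" where
  "copy_edge b e = (\<lambda>x. (x, b)) ` e"

lemma mem_copy_edge [simp]: "(v, c) \<in> copy_edge b e \<longleftrightarrow> v \<in> e \<and> c = b"
  by (auto simp: copy_edge_def)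

lemma inj_on_copy_edge: "inj_on (copy_edge b) F"
proof (rule inj_on_inverseI)
  show "fst ` copy_edge b e = e" for e
    by (force simp: copy_edge_def)
qed

definition doubled_edges :: "'a set \<Rightarrow> 'a set set \<Rightarrow> ('a \<times> bool) set set" where
  "doubled_edges V E = {copy_edge b e | b e. e \<in> E} \<union> {{(v, True), (v, False)} | v. v \<in> V}"

lemma card_copy_edge: "card (copy_edge b e) = card e"
  unfolding copy_edge_def by (rule card_image) (auto intro: inj_onI)

lemma doubled_edgesE:
  assumes "c \<in> doubled_edges V E"
  obtains (copy) b e where "e \<in> E" "c = copy_edge b e"
    | (twin) v where "v \<in> V" "c = {(v, True), (v, False)}"
  using assms unfolding doubled_edges_def by blast

lemma twin_edge_not_copy: "{(v, True), (v, False)} \<noteq> copy_edge b e"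
proof
  assume twin: "{(v, True), (v, False)} = copy_edge b e"
  have "(v, \<not> b) \<in> {(v, True), (v, False)}"
    by (cases b) simp_all
  then show False
    unfolding twin by simp
qed

lemma simple_doubled_graph:
  assumes "simple_graph V E"
  shows "simple_graph (V \<times> UNIV) (doubled_edges V E)"
proof -
  have "c \<subseteq> V \<times> UNIV \<and> card c = 2" if "c \<in> doubled_edges V E" for c
    using that
  proof (cases rule: doubled_edgesE)
    case (copy b e)
    moreover have "e \<subseteq> V" "card e = 2"
      using assms copy(1) by (auto simp: simple_graph_def)
    ultimately show ?thesis
      by (auto simp: card_copy_edge)
  qed simp
  then show ?thesis
    using assms by (simp add: simple_graph_def)
qed

lemma degree_doubled_subgraph:
  assumes "F \<subseteq> doubled_edges V E" "finite E"
  shows "degree F (v, b) = degree {e\<in>E. copy_edge b e \<in> F} v + card ({{(v, True), (v, False)}} \<inter> F)"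
proof -
  have "c \<in> copy_edge b ` {e\<in>{e\<in>E. copy_edge b e \<in> F}. v \<in> e} \<union> ({{(v, True), (v, False)}} \<inter> F)"
    if "c \<in> F" "(v, b) \<in> c" for c
  proof -
    have "c \<in> doubled_edges V E" using assms that(1) by blast
    then show ?thesis
    proof (cases rule: doubled_edgesE)
      case (copy b' e)
      then show ?thesis using that by auto
    qed (use that in auto)
  qed
  then have incident: "{c\<in>F. (v, b) \<in> c} = copy_edge b ` {e\<in>{e\<in>E. copy_edge b e \<in> F}. v \<in> e}
      \<union> ({{(v, True), (v, False)}} \<inter> F)"
    by auto
  have "{(v, True), (v, False)} \<notin> copy_edge b ` A" for A
    by (metis imageE twin_edge_not_copy)
  then have "card {c\<in>F. (v, b) \<in> c}
      = card (copy_edge b ` {e\<in>{e\<in>E. copy_edge b e \<in> F}. v \<in> e}) + card ({{(v, True), (v, False)}} \<inter> F)"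
    unfolding incident using assms(2) by (intro card_Un_disjoint) auto
  then show ?thesis
    unfolding degree_def by (simp add: card_image[OF inj_on_copy_edge])
qed

lemma regular_near_factor:
  assumes G: "simple_graph V E" and reg: "\<forall>v\<in>V. degree E v = d" and "2 * r \<le> d"
  shows "\<exists>F\<subseteq>E. \<forall>v\<in>V. degree F v = 2 * r \<or> degree F v + 1 = 2 * r"
proof (cases "even d")
  case True
  then have "\<forall>v\<in>V. degree E v = 2 * (d div 2)" "r \<le> d div 2"
    using reg \<open>2 * r \<le> d\<close> by simp_all
  from even_regular_factor[OF G this] show ?thesis
    by auto
next
  case False
  define m where "m = (d + 1) div 2"
  have finE: "finite E"
    using G by (rule simple_graph_finite_edges)
  have "degree (doubled_edges V E) (v, b) = 2 * m" if "v \<in> V" for v b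
  proof -
    have "{e\<in>E. copy_edge b e \<in> doubled_edges V E} = E"
      unfolding doubled_edges_def by blast
    moreover have "{{(v, True), (v, False)}} \<inter> doubled_edges V E = {{(v, True), (v, False)}}"
      unfolding doubled_edges_def using that by blast
    ultimately have "degree (doubled_edges V E) (v, b) = d + 1"
      using degree_doubled_subgraph[OF order_refl finE, of V v b] reg that by simp
    then show ?thesis
      using False unfolding m_def by presburger
  qed
  then have "\<forall>p\<in>V \<times> UNIV. degree (doubled_edges V E) p = 2 * m"
    by auto
  moreover have "r \<le> m"
    using \<open>2 * r \<le> d\<close> unfolding m_def by linarith
  ultimately have "\<exists>F2\<subseteq>doubled_edges V E. \<forall>p\<in>V \<times> UNIV. degree F2 p = 2 * r"
    by (rule even_regular_factor[OF simple_doubled_graph[OF G]])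
  then obtain F2 where F2: "F2 \<subseteq> doubled_edges V E" "\<forall>p\<in>V \<times> UNIV. degree F2 p = 2 * r"
    by blast
  define F where "F = {e\<in>E. copy_edge True e \<in> F2}"
  have "degree F v = 2 * r \<or> degree F v + 1 = 2 * r" if "v \<in> V" for v
  proof -
    have "card ({{(v, True), (v, False)}} \<inter> F2) \<le> 1"
      by (simp add: card_le_Suc0_iff_eq)
    moreover have "degree F2 (v, True) = 2 * r"
      using F2(2) that by simp
    ultimately show ?thesis
      using degree_doubled_subgraph[OF F2(1) finE, of v True] unfolding F_def by linarith
  qed
  then show ?thesis
    by (intro exI[of _ F]) (auto simp: F_def)
qed

theorem lemma2p3:
  fixes V :: "'a set" and E :: "'a set set" and k d :: int
  assumes "even k" and "0 \<le> k" and "k \<le> d"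
    and "simple_graph V E" and "regular V E (nat d)"
  shows "\<exists>E' \<subseteq> E. \<forall>v\<in>V. int (degree E' v) = k \<or> int (degree E' v) = k - 1"
proof -
  define r where "r = nat (k div 2)"
  have k: "k = 2 * int r"
    using assms(1,2) unfolding r_def by (auto elim!: evenE)
  then have "2 * r \<le> nat d"
    using assms(3) by linarith
  with regular_near_factor[OF assms(4)] assms(5) obtain F
    where "F \<subseteq> E" "\<forall>v\<in>V. degree F v = 2 * r \<or> degree F v + 1 = 2 * r"
    unfolding regular_def by meson
  then show ?thesis
    using k by (intro exI[of _ F]) auto
qed

end
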